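(* Let $M := \langle X \mid R\rangle$ and let $Y := \{x\in X \mid \exists\, a,b,c\in\langle X\rangle \text{ such that } (axb,c)\in R \text{ or } (c,axb)\in R\}$. If $M$ has accepted elasticity and $X \neq Y$, then $M$ is fully elastic.
   Context: For a set $X$, $\langle X\rangle$ is the free monoid on $X$ (identity $1$); $M=\langle X\mid R\rangle$ is the monoid presented by generators $X$ and relations $R\subseteq\langle X\rangle\times\langle X\rangle$. $|a|$ is word length; $a=_M b$ means equal images in $M$. $\mathsf{L}_M(a) := \{|b| : b\in\langle X\rangle,\ b=_M a\}$, $\mathcal{L}(M):=\{\mathsf{L}_M(a): a\in\langle X\rangle\}$. For $L\subseteq\mathbb{N}$, $\rho(L) := \sup(L\cap\mathbb{N}^+)/\min(L\cap\mathbb{N}^+)\in\mathbb{Q}^+\cup\{\infty\}$ if $L\cap\mathbb{N}^+\neq\emptyset$, and $\rho(L):=0$ otherwise. $\rho(M) := \sup\{\rho(L) : L\in\mathcal{L}(M)\}$. $M$ has accepted elasticity if $\rho(M) = \rho(L) < \infty$ for some $L\in\mathcal{L}(M)$. $M$ is fully elastic if for every $q\in\mathbb{Q}$ with $1<q<\rho(M)$ there is $L\in\mathcal{L}(M)$ with $\rho(L) = q$. *)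

theory Defs
  imports Complex_Main "HOL-Library.Extended_Real"
begin

text \<open>The free monoid on X is modelled as lists over X (words in lists X), identity [].
  The monoid M = <X | R> is modelled by the congruence on lists X generated by R:
  two words have equal image in M iff they are related by pres_eq X R.\<close>

inductive pres_eq :: "'a set \<Rightarrow> ('a list \<times> 'a list) set \<Rightarrow> 'a list \<Rightarrow> 'a list \<Rightarrow> bool"
  for X :: "'a set" and R :: "('a list \<times> 'a list) set" where
  pe_refl: "a \<in> lists X \<Longrightarrow> pres_eq X R a a"
| pe_rel: "(u, v) \<in> R \<Longrightarrow> p \<in> lists X \<Longrightarrow> s \<in> lists X \<Longrightarrow> pres_eq X R (p @ u @ s) (p @ v @ s)"
| pe_sym: "pres_eq X R a b \<Longrightarrow> pres_eq X R b a"
| pe_trans: "pres_eq X R a b \<Longrightarrow> pres_eq X R b c \<Longrightarrow> pres_eq X R a c"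

definition length_set :: "'a set \<Rightarrow> ('a list \<times> 'a list) set \<Rightarrow> 'a list \<Rightarrow> nat set" where
  "length_set X R a = {length b | b. b \<in> lists X \<and> pres_eq X R b a}"

definition length_sets :: "'a set \<Rightarrow> ('a list \<times> 'a list) set \<Rightarrow> nat set set" where
  "length_sets X R = {length_set X R a | a. a \<in> lists X}"

definition rho_set :: "nat set \<Rightarrow> ereal" where
  "rho_set L = (if L \<inter> {1..} = {} then 0
     else Sup ((\<lambda>n. ereal (real n)) ` (L \<inter> {1..})) / ereal (real (Min (L \<inter> {1..}))))"

definition elasticity :: "'a set \<Rightarrow> ('a list \<times> 'a list) set \<Rightarrow> ereal" where
  "elasticity X R = Sup (rho_set ` length_sets X R)"

definition accepted_elasticity :: "'a set \<Rightarrow> ('a list \<times> 'a list) set \<Rightarrow> bool" where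
  "accepted_elasticity X R \<longleftrightarrow>
     (\<exists>L \<in> length_sets X R. elasticity X R = rho_set L \<and> rho_set L < \<infinity>)"

definition fully_elastic :: "'a set \<Rightarrow> ('a list \<times> 'a list) set \<Rightarrow> bool" where
  "fully_elastic X R \<longleftrightarrow>
     (\<forall>q :: rat. 1 < q \<and> ereal (real_of_rat q) < elasticity X R \<longrightarrow>
        (\<exists>L \<in> length_sets X R. rho_set L = ereal (real_of_rat q)))"

definition rel_letters :: "'a set \<Rightarrow> ('a list \<times> 'a list) set \<Rightarrow> 'a set" where
  "rel_letters X R = {x \<in> X. \<exists>a b c. a \<in> lists X \<and> b \<in> lists X \<and> c \<in> lists X \<and>
      ((a @ [x] @ b, c) \<in> R \<or> (c, a @ [x] @ b) \<in> R)}"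

end

theory Submission
  imports Defs
begin

(* Let the word a realise the accepted elasticity, with longest and shortest representatives of
   lengths M and m, so rho(M) = M/m. Powers a^n have representatives of lengths nM and nm, and
   since rho(L(a^n)) cannot exceed M/m these are exactly the extreme lengths of a^n.
   Finite elasticity rules out nonempty words equal to 1, and a letter x occurring in no relation
   splits every representative into a part before and a part after it, so L(x^j w) = L(w) + j.
   For 1 < p/r < M/m the choice n = p - r, j = rM - pm therefore gives
   rho(L(x^j a^n)) = (nM + j)/(nm + j) = p/r. *)

lemma rho_set_eq_Max_div_Min:
  assumes "finite L" "L \<noteq> {}" "0 \<notin> L"
  shows "rho_set L = ereal (real (Max L) / real (Min L))"
proof -
  have pos: "L \<inter> {1..} = L" using assms(3) by (auto simp: Suc_le_eq intro: gr0I)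
  have "Sup ((\<lambda>n. ereal (real n)) ` L) = Max ((\<lambda>n. ereal (real n)) ` L)"
    using assms by (intro cSup_eq_Max) auto
  also have "\<dots> = ereal (real (Max L))"
    using assms by (intro mono_Max_commute[symmetric]) (auto simp: mono_def)
  finally show ?thesis using assms unfolding rho_set_def pos by simp (metis gr0I)
qed

lemma rho_set_infinite:
  assumes "infinite L"
  shows "rho_set L = \<infinity>"
proof -
  let ?S = "L \<inter> {1..}"
  have "?S = L - {0}" by auto
  then have S: "infinite ?S" using assms by simp
  have "Sup ((\<lambda>n. ereal (real n)) ` ?S) = \<infinity>"
    unfolding Sup_eq_top_iff[where 'a=ereal, unfolded top_ereal_def]
  proof (intro allI impI)
    fix y :: ereal assume "y < \<infinity>"
    then obtain r where "y \<le> ereal r" by (cases y) auto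
    obtain n where "n \<in> ?S" "n > nat \<lceil>r\<rceil>"
      using S unfolding infinite_nat_iff_unbounded by blast
    then have "r < real n" using real_nat_ceiling_ge[of r] by linarith
    then have "y < ereal (real n)" using \<open>y \<le> ereal r\<close> by (simp add: order.strict_trans1)
    then show "\<exists>z \<in> (\<lambda>n. ereal (real n)) ` ?S. y < z" using \<open>n \<in> ?S\<close> by blast
  qed
  moreover have "?S \<noteq> {}" using S by auto
  \<comment> \<open>Min of an infinite set is unspecified, but \<infinity> divided by any natural number is \<infinity>.\<close>
  ultimately show ?thesis
    by (cases "Min ?S = 0") (auto simp: rho_set_def divide_ereal_def)
qed

lemma rho_set_le_elasticity: "L \<in> length_sets X R \<Longrightarrow> rho_set L \<le> elasticity X R"
  unfolding elasticity_def by (rule Sup_upper) auto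

lemma Max_Min_eq_if_ratio_le:
  fixes T :: "nat set"
  assumes "finite T" "0 \<notin> T" "A \<in> T" "B \<in> T"
    and ratio: "real (Max T) / real (Min T) \<le> real A / real B"
  shows "Max T = A" "Min T = B"
proof -
  have A: "A \<le> Max T" and B: "Min T \<le> B" using assms by auto
  have "0 < Min T" using assms by (metis Min_in empty_iff gr0I)
  moreover have "0 < A" "0 < B" using assms by (metis gr0I)+
  ultimately have "real (Max T) * real B \<le> real A * real (Min T)"
    using ratio by (simp add: field_simps)
  then have "Max T * B \<le> A * Min T" by (metis of_nat_le_iff of_nat_mult)
  moreover have "A * Min T \<le> Max T * Min T" "Max T * Min T \<le> Max T * B"
    using A B by simp_all
  ultimately have "A * Min T = Max T * Min T" "Max T * Min T = Max T * B" by linarith+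
  then show "Max T = A" "Min T = B" using \<open>0 < Min T\<close> \<open>0 < A\<close> A by auto
qed

lemma rat_eq_shifted_ratio:
  fixes q :: rat and M m :: nat
  assumes "1 < q" "real_of_rat q < real M / real m" "0 < m"
  obtains n j :: nat where "0 < n" "real (n * M + j) / real (n * m + j) = real_of_rat q"
proof -
  obtain p r where pr: "quotient_of q = (p, r)" by (cases "quotient_of q") auto
  have r: "r > 0" using quotient_of_denom_pos[OF pr] .
  have q: "real_of_rat q = real_of_int p / real_of_int r"
    using quotient_of_div[OF pr] by (simp add: of_rat_divide)
  have q1: "1 < real_of_rat q" using assms(1) by (metis of_rat_1 of_rat_less)
  then have "1 < real_of_int p / real_of_int r" using q by simp
  then have "r < p" using r by (simp add: less_divide_eq)
  have "real_of_int p * real m < real_of_int r * real M"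
    using assms(2,3) r q by (simp add: field_simps)
  then have "p * int m < r * int M" by (metis of_int_less_iff of_int_mult of_int_of_nat_eq)
  define n where "n = nat (p - r)"
  define j where "j = nat (r * M - p * m)"
  have num: "real (n * M + j) = real_of_int p * (real M - real m)"
    and den: "real (n * m + j) = real_of_int r * (real M - real m)"
    using \<open>r < p\<close> \<open>p * int m < r * int M\<close> unfolding n_def j_def
    by (simp_all add: algebra_simps of_nat_diff)
  have "1 < real M / real m" using q1 assms(2) by linarith
  then have "real m < real M" using assms(3) by (simp add: less_divide_eq)
  then have "real (n * M + j) / real (n * m + j) = real_of_rat q"
    unfolding num den q by simp
  moreover have "0 < n" using \<open>r < p\<close> by (simp add: n_def)
  ultimately show ?thesis using that by blast
qed

lemma pres_eq_append_right:
  "pres_eq X R a b \<Longrightarrow> c \<in> lists X \<Longrightarrow> pres_eq X R (a @ c) (b @ c)"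
proof (induction rule: pres_eq.induct)
  case (pe_refl a)
  then show ?case by (intro pres_eq.pe_refl) simp
next
  case (pe_rel u v p s)
  then show ?case using pres_eq.pe_rel[where p=p and s="s @ c"] by simp
qed (blast intro: pres_eq.pe_sym pres_eq.pe_trans)+

lemma pres_eq_append_left:
  "pres_eq X R a b \<Longrightarrow> c \<in> lists X \<Longrightarrow> pres_eq X R (c @ a) (c @ b)"
proof (induction rule: pres_eq.induct)
  case (pe_refl a)
  then show ?case by (intro pres_eq.pe_refl) simp
next
  case (pe_rel u v p s)
  then show ?case using pres_eq.pe_rel[where p="c @ p" and s=s] by simp
qed (blast intro: pres_eq.pe_sym pres_eq.pe_trans)+

lemma length_set_in_length_sets: "a \<in> lists X \<Longrightarrow> length_set X R a \<in> length_sets X R"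
  unfolding length_sets_def by blast

lemma takeWhile_dropWhile_first_occurrence:
  assumes "x \<notin> set ys"
  shows "takeWhile ((\<noteq>) x) (ys @ x # zs) = ys" "tl (dropWhile ((\<noteq>) x) (ys @ x # zs)) = zs"
  using assms by (induction ys) auto

context
  fixes X :: "'a set" and R :: "('a list \<times> 'a list) set"
  assumes R: "R \<subseteq> lists X \<times> lists X"
begin

lemma pres_eq_in_lists: "pres_eq X R a b \<Longrightarrow> a \<in> lists X \<and> b \<in> lists X"
  by (induction rule: pres_eq.induct) (use R in auto)

lemma pres_eq_append: "pres_eq X R a b \<Longrightarrow> pres_eq X R c d \<Longrightarrow> pres_eq X R (a @ c) (b @ d)"
  by (meson pres_eq_append_left pres_eq_append_right pres_eq_in_lists pres_eq.pe_trans)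

lemma pres_eq_concat_replicate:
  "pres_eq X R a b \<Longrightarrow> pres_eq X R (concat (replicate n a)) (concat (replicate n b))"
  by (induction n) (auto intro: pres_eq_append pres_eq.pe_refl)

lemma length_in_length_set: "pres_eq X R b a \<Longrightarrow> length b \<in> length_set X R a"
  unfolding length_set_def using pres_eq_in_lists by blast

lemma pres_eq_Nil_if_elasticity_finite:
  assumes "elasticity X R < \<infinity>" "y \<in> X" "pres_eq X R c []"
  shows "c = []"
proof (rule ccontr)
  assume "c \<noteq> []"
  \<comment> \<open>Padding [y] with copies of c gives representatives of [y] of unbounded length.\<close>
  have "k * length c + 1 \<in> length_set X R [y]" for k
  proof -
    have "pres_eq X R (concat (replicate k c)) []"
      using pres_eq_concat_replicate[OF assms(3)] by simp
    then have "pres_eq X R ([y] @ concat (replicate k c)) ([y] @ [])"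
      using assms(2) by (intro pres_eq_append_left) auto
    from length_in_length_set[OF this] show ?thesis
      by (simp add: length_concat sum_list_replicate)
  qed
  moreover have "m < Suc m * length c + 1" for m using \<open>c \<noteq> []\<close> by (cases c) auto
  ultimately have "infinite (length_set X R [y])"
    unfolding infinite_nat_iff_unbounded by blast
  then have "rho_set (length_set X R [y]) = \<infinity>" by (rule rho_set_infinite)
  moreover have "rho_set (length_set X R [y]) \<le> elasticity X R"
    using assms(2) by (intro rho_set_le_elasticity length_set_in_length_sets) simp
  ultimately show False using assms(1) by simp
qed

lemma length_set_Nil:
  assumes "elasticity X R < \<infinity>" "y \<in> X"
  shows "length_set X R [] = {0}"
  using pres_eq_Nil_if_elasticity_finite[OF assms]
  by (auto simp: length_set_def intro: pres_eq.pe_refl)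

lemma length_set_nonempty_word:
  assumes "elasticity X R < \<infinity>" "a \<in> lists X" "a \<noteq> []"
  shows "finite (length_set X R a)" "length_set X R a \<noteq> {}" "0 \<notin> length_set X R a"
proof -
  show "length_set X R a \<noteq> {}"
    using length_in_length_set[OF pres_eq.pe_refl[OF assms(2)]] by blast
  show "0 \<notin> length_set X R a"
  proof
    assume "0 \<in> length_set X R a"
    then have "pres_eq X R a []" unfolding length_set_def by (auto intro: pres_eq.pe_sym)
    moreover have "hd a \<in> X" using assms(2,3) by (cases a) auto
    ultimately show False using pres_eq_Nil_if_elasticity_finite[OF assms(1)] assms(3) by blast
  qed
  show "finite (length_set X R a)"
  proof (rule ccontr)
    assume "infinite (length_set X R a)"
    then have "rho_set (length_set X R a) = \<infinity>" by (rule rho_set_infinite)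
    then show False
      using rho_set_le_elasticity[OF length_set_in_length_sets[where R=R, OF assms(2)]] assms(1)
      by simp
  qed
qed

lemma length_set_concat_replicate_if_rho_maximal:
  assumes fin: "elasticity X R < \<infinity>" and a: "a \<in> lists X" "a \<noteq> []"
    and max: "rho_set (length_set X R a) = elasticity X R" and "0 < n"
  shows "Max (length_set X R (concat (replicate n a))) = n * Max (length_set X R a)"
    and "Min (length_set X R (concat (replicate n a))) = n * Min (length_set X R a)"
proof -
  let ?L = "length_set X R a" and ?Ln = "length_set X R (concat (replicate n a))"
  have an: "concat (replicate n a) \<in> lists X" "concat (replicate n a) \<noteq> []"
    using a \<open>0 < n\<close> by auto
  note L = length_set_nonempty_word[OF fin a] and Ln = length_set_nonempty_word[OF fin an]
  have "n * k \<in> ?Ln" if "k \<in> ?L" for k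
  proof -
    obtain b where "pres_eq X R b a" "length b = k"
      using \<open>k \<in> ?L\<close> unfolding length_set_def by blast
    from length_in_length_set[OF pres_eq_concat_replicate[OF this(1)]] this(2)
    show ?thesis by (simp add: length_concat sum_list_replicate)
  qed
  then have "n * Max ?L \<in> ?Ln" "n * Min ?L \<in> ?Ln" using L by auto
  moreover have "rho_set ?Ln \<le> rho_set ?L"
    unfolding max using rho_set_le_elasticity[OF length_set_in_length_sets[where R=R, OF an(1)]] .
  then have "real (Max ?Ln) / real (Min ?Ln) \<le> real (n * Max ?L) / real (n * Min ?L)"
    using L Ln \<open>0 < n\<close> by (simp add: rho_set_eq_Max_div_Min)
  ultimately show "Max ?Ln = n * Max ?L" "Min ?Ln = n * Min ?L"
    using Max_Min_eq_if_ratio_le[OF Ln(1,3)] by blast+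
qed

context
  fixes x :: 'a
  assumes x: "x \<in> X" "x \<notin> rel_letters X R"
begin

lemma free_letter_not_in_relation:
  assumes "(u, v) \<in> R"
  shows "x \<notin> set u" "x \<notin> set v"
proof -
  have "u \<in> lists X" "v \<in> lists X" using assms R by auto
  show "x \<notin> set u"
  proof
    assume "x \<in> set u"
    then obtain a b where "u = a @ [x] @ b" using split_list by fastforce
    then show False using x \<open>u \<in> lists X\<close> \<open>v \<in> lists X\<close> assms
      unfolding rel_letters_def by auto
  qed
  show "x \<notin> set v"
  proof
    assume "x \<in> set v"
    then obtain a b where "v = a @ [x] @ b" using split_list by fastforce
    then show False using x \<open>u \<in> lists X\<close> \<open>v \<in> lists X\<close> assms
      unfolding rel_letters_def by auto
  qed
qed

lemma pres_eq_split_at_free_letter: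
  "pres_eq X R u v \<Longrightarrow> (x \<in> set u \<longleftrightarrow> x \<in> set v) \<and>
    (x \<in> set u \<longrightarrow> pres_eq X R (takeWhile ((\<noteq>) x) u) (takeWhile ((\<noteq>) x) v)
       \<and> pres_eq X R (tl (dropWhile ((\<noteq>) x) u)) (tl (dropWhile ((\<noteq>) x) v)))"
  (is "_ \<Longrightarrow> _ \<and> (_ \<longrightarrow> ?split u v)")
proof (induction rule: pres_eq.induct)
  \<comment> \<open>x occurs in no relation, so each rewriting step happens entirely before or entirely
    after the first x.\<close>
  have split: "?split (l @ x # r) (l' @ x # r')"
    if "x \<notin> set l" "x \<notin> set l'" "pres_eq X R l l'" "pres_eq X R r r'" for l r l' r'
    using that by (simp add: takeWhile_dropWhile_first_occurrence)
  {
    case (pe_refl a)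
    have "?split a a" if xa: "x \<in> set a"
    proof -
      obtain a1 a2 where "a = a1 @ x # a2" "x \<notin> set a1"
        using split_list_first[OF xa] by blast
      moreover have "pres_eq X R a1 a1" "pres_eq X R a2 a2"
        using pe_refl \<open>a = a1 @ x # a2\<close> by (auto intro: pres_eq.pe_refl)
      ultimately show ?thesis using split[of a1 a1 a2 a2] by simp
    qed
    then show ?case by simp
  next
    case (pe_rel u v p s)
    have "x \<notin> set u" "x \<notin> set v" by (fact free_letter_not_in_relation[OF pe_rel(1)])+
    have "?split (p @ u @ s) (p @ v @ s)" if xus: "x \<in> set (p @ u @ s)"
    proof (cases "x \<in> set p")
      case True
      then obtain p1 p2 where p: "p = p1 @ x # p2" "x \<notin> set p1" by (metis split_list_first)
      have "pres_eq X R (p2 @ u @ s) (p2 @ v @ s)" using pe_rel p by (intro pres_eq.pe_rel) auto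
      moreover have "pres_eq X R p1 p1" using pe_rel p by (intro pres_eq.pe_refl) auto
      ultimately show ?thesis using split[of p1 p1 "p2 @ u @ s" "p2 @ v @ s"] p by simp
    next
      case False
      then have "x \<in> set s" using xus \<open>x \<notin> set u\<close> by simp
      then obtain s1 s2 where s: "s = s1 @ x # s2" "x \<notin> set s1" by (metis split_list_first)
      have "pres_eq X R (p @ u @ s1) (p @ v @ s1)" using pe_rel s by (intro pres_eq.pe_rel) auto
      moreover have "pres_eq X R s2 s2" using pe_rel s by (intro pres_eq.pe_refl) auto
      ultimately show ?thesis
        using split[of "p @ u @ s1" "p @ v @ s1" s2 s2] s False \<open>x \<notin> set u\<close> \<open>x \<notin> set v\<close>
        by simp
    qed
    then show ?case using \<open>x \<notin> set u\<close> \<open>x \<notin> set v\<close> by simp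
  next
    case (pe_sym a b)
    then show ?case using pres_eq.pe_sym by blast
  next
    case (pe_trans a b c)
    then show ?case using pres_eq.pe_trans by blast
  }
qed

lemma pres_eq_Cons_free_letter:
  assumes "pres_eq X R b (x # w)"
  obtains c d where "b = c @ x # d" "pres_eq X R c []" "pres_eq X R d w"
proof -
  have "x \<in> set b"
    and c: "pres_eq X R (takeWhile ((\<noteq>) x) b) []"
    and d: "pres_eq X R (tl (dropWhile ((\<noteq>) x) b)) w"
    using pres_eq_split_at_free_letter[OF assms] by (simp_all add: pres_eq.pe_sym)
  then obtain c d where b: "b = c @ x # d" "x \<notin> set c" by (metis split_list_first)
  then show ?thesis using that c d by (simp add: takeWhile_dropWhile_first_occurrence)
qed

lemma pres_eq_replicate_free_letter:
  assumes "elasticity X R < \<infinity>"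
  shows "pres_eq X R b (replicate j x @ w) \<Longrightarrow> \<exists>d. b = replicate j x @ d \<and> pres_eq X R d w"
proof (induction j arbitrary: b)
  case (Suc j)
  then obtain c d where "b = c @ x # d" "pres_eq X R c []" "pres_eq X R d (replicate j x @ w)"
    using pres_eq_Cons_free_letter by (metis append_Cons replicate_Suc)
  moreover have "c = []" using pres_eq_Nil_if_elasticity_finite[OF assms x(1)] \<open>pres_eq X R c []\<close> .
  ultimately show ?case using Suc.IH by fastforce
qed simp

lemma length_set_replicate_free_letter:
  assumes "elasticity X R < \<infinity>" "w \<in> lists X"
  shows "length_set X R (replicate j x @ w) = (\<lambda>l. l + j) ` length_set X R w"
proof (intro equalityI subsetI)
  fix l assume "l \<in> length_set X R (replicate j x @ w)"
  then obtain b where "l = length b" "pres_eq X R b (replicate j x @ w)"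
    unfolding length_set_def by blast
  then obtain d where "b = replicate j x @ d" "pres_eq X R d w"
    using pres_eq_replicate_free_letter[OF assms(1)] by blast
  then show "l \<in> (\<lambda>l. l + j) ` length_set X R w"
    using \<open>l = length b\<close> length_in_length_set by force
next
  fix l assume "l \<in> (\<lambda>l. l + j) ` length_set X R w"
  then obtain d where "l = length d + j" "pres_eq X R d w"
    unfolding length_set_def by blast
  then have "pres_eq X R (replicate j x @ d) (replicate j x @ w)"
    using x(1) by (intro pres_eq_append_left) auto
  from length_in_length_set[OF this] show "l \<in> length_set X R (replicate j x @ w)"
    using \<open>l = length d + j\<close> by (simp add: add.commute)
qed

lemma rho_set_replicate_free_letter:
  assumes fin: "elasticity X R < \<infinity>" and w: "w \<in> lists X" "w \<noteq> []"
  shows "rho_set (length_set X R (replicate j x @ w))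
    = ereal (real (Max (length_set X R w) + j) / real (Min (length_set X R w) + j))"
proof -
  note L = length_set_nonempty_word[OF fin w]
  have "Max ((\<lambda>l. l + j) ` length_set X R w) = Max (length_set X R w) + j"
    "Min ((\<lambda>l. l + j) ` length_set X R w) = Min (length_set X R w) + j"
    using L(1,2)
    by (simp_all add: mono_Max_commute[symmetric] mono_Min_commute[symmetric] mono_def)
  moreover have "0 \<notin> (\<lambda>l. l + j) ` length_set X R w" using L(3) by force
  ultimately show ?thesis
    using L by (simp add: length_set_replicate_free_letter[OF fin w(1)] rho_set_eq_Max_div_Min)
qed

lemma ex_length_set_rho_eq:
  assumes fin: "elasticity X R < \<infinity>" and a: "a \<in> lists X" "a \<noteq> []"
    and max: "rho_set (length_set X R a) = elasticity X R"
    and q: "1 < q" "ereal (real_of_rat q) < elasticity X R"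
  shows "\<exists>L \<in> length_sets X R. rho_set L = ereal (real_of_rat q)"
proof -
  note L = length_set_nonempty_word[OF fin a]
  let ?M = "Max (length_set X R a)" and ?m = "Min (length_set X R a)"
  have "0 < ?m" using L by (metis Min_in gr0I)
  moreover have "real_of_rat q < real ?M / real ?m"
    using q(2) unfolding max[symmetric] by (simp add: rho_set_eq_Max_div_Min L)
  ultimately obtain n j where "0 < n"
    and nj: "real (n * ?M + j) / real (n * ?m + j) = real_of_rat q"
    using rat_eq_shifted_ratio[OF q(1)] by blast
  let ?w = "concat (replicate n a)"
  have w: "?w \<in> lists X" "?w \<noteq> []" using a \<open>0 < n\<close> by auto
  have "rho_set (length_set X R (replicate j x @ ?w)) = ereal (real_of_rat q)"
    using rho_set_replicate_free_letter[OF fin w]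
      length_set_concat_replicate_if_rho_maximal[OF fin a max \<open>0 < n\<close>] nj
    by simp
  moreover have "replicate j x @ ?w \<in> lists X" using x(1) w(1) by auto
  ultimately show ?thesis by (rule bexI[OF _ length_set_in_length_sets])
qed

end

end

theorem theorem4p5:
  fixes X :: "'a set" and R :: "('a list \<times> 'a list) set"
  assumes "R \<subseteq> lists X \<times> lists X"
    and "accepted_elasticity X R"
    and "X \<noteq> rel_letters X R"
  shows "fully_elastic X R"
  unfolding fully_elastic_def
proof (intro allI impI, elim conjE)
  fix q :: rat
  assume q: "1 < q" "ereal (real_of_rat q) < elasticity X R"
  obtain a where a: "a \<in> lists X" "rho_set (length_set X R a) = elasticity X R"
    and fin: "elasticity X R < \<infinity>"
    using assms(2) unfolding accepted_elasticity_def length_sets_def by force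
  obtain x where x: "x \<in> X" "x \<notin> rel_letters X R"
    using assms(3) unfolding rel_letters_def by blast
  have "a \<noteq> []"
  proof
    assume "a = []"
    then have "elasticity X R = 0"
      using a(2) length_set_Nil[OF assms(1) fin x(1)] by (simp add: rho_set_def)
    moreover have "0 < real_of_rat q" using q(1) by simp
    ultimately show False using q(2) by simp
  qed
  then show "\<exists>L \<in> length_sets X R. rho_set L = ereal (real_of_rat q)"
    by (rule ex_length_set_rho_eq[OF assms(1) x fin a(1) _ a(2) q])
qed

end
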